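(* Let $q$ be a prime power. A rank-$r$ matroid $M$ in $\mathcal{M}_q$ is round if and only if $M\cong PG(r-1,q)$.
   Context: A matroid is round if it has no two disjoint cocircuits. For matroids $M_1,M_2$ whose ground sets meet in a set $T$ that is a modular flat of $M_1$ with $M_1|T=M_2|T=N$, the generalized parallel connection $P_N(M_1,M_2)$ is the matroid on $E(M_1)\cup E(M_2)$ whose flats are the sets $Z$ with $Z\cap E(M_i)$ a flat of $M_i$ for $i=1,2$ (if $T=\emptyset$ this is $M_1\oplus M_2$). $\mathcal{M}_q$ is the class of matroids that can be built from projective geometries over $GF(q)$ by a sequence of generalized parallel connections across projective geometries over $GF(q)$. *)

theory Defs
  imports "HOL-Algebra.Ring" "HOL-Computational_Algebra.Primes"
begin

type_synonym 'a matroid = "'a set \<times> ('a set \<Rightarrow> bool)"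

definition gr :: "'a matroid \<Rightarrow> 'a set" where "gr M = fst M"
definition indep :: "'a matroid \<Rightarrow> 'a set \<Rightarrow> bool" where "indep M = snd M"

definition matroid :: "'a matroid \<Rightarrow> bool" where
  "matroid M \<longleftrightarrow> finite (gr M) \<and> indep M {} \<and>
     (\<forall>X. indep M X \<longrightarrow> X \<subseteq> gr M) \<and>
     (\<forall>X Y. indep M X \<and> Y \<subseteq> X \<longrightarrow> indep M Y) \<and>
     (\<forall>X Y. indep M X \<and> indep M Y \<and> card X < card Y \<longrightarrow>
        (\<exists>e\<in>Y - X. indep M (insert e X)))"

definition mrank_of :: "'a matroid \<Rightarrow> 'a set \<Rightarrow> nat" where
  "mrank_of M X = Max {card I | I. I \<subseteq> X \<and> indep M I}"

definition matroid_rank :: "'a matroid \<Rightarrow> nat" where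
  "matroid_rank M = mrank_of M (gr M)"

definition mclosure :: "'a matroid \<Rightarrow> 'a set \<Rightarrow> 'a set" where
  "mclosure M X = {e \<in> gr M. mrank_of M (insert e X) = mrank_of M X}"

definition flat :: "'a matroid \<Rightarrow> 'a set \<Rightarrow> bool" where
  "flat M F \<longleftrightarrow> F \<subseteq> gr M \<and> mclosure M F = F"

definition modular_flat :: "'a matroid \<Rightarrow> 'a set \<Rightarrow> bool" where
  "modular_flat M F \<longleftrightarrow> flat M F \<and>
     (\<forall>G. flat M G \<longrightarrow>
        mrank_of M F + mrank_of M G = mrank_of M (F \<union> G) + mrank_of M (F \<inter> G))"

definition basis :: "'a matroid \<Rightarrow> 'a set \<Rightarrow> bool" where
  "basis M B \<longleftrightarrow> indep M B \<and> (\<forall>X. indep M X \<and> B \<subseteq> X \<longrightarrow> X = B)"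

text \<open>Cocircuits: minimal nonempty subsets of the ground set meeting every basis
  (i.e. circuits of the dual matroid).\<close>
definition codependent :: "'a matroid \<Rightarrow> 'a set \<Rightarrow> bool" where
  "codependent M C \<longleftrightarrow> C \<subseteq> gr M \<and> C \<noteq> {} \<and> (\<forall>B. basis M B \<longrightarrow> C \<inter> B \<noteq> {})"

definition cocircuit :: "'a matroid \<Rightarrow> 'a set \<Rightarrow> bool" where
  "cocircuit M C \<longleftrightarrow> codependent M C \<and> (\<forall>D. D \<subset> C \<longrightarrow> \<not> codependent M D)"

definition round :: "'a matroid \<Rightarrow> bool" where
  "round M \<longleftrightarrow> \<not> (\<exists>C D. cocircuit M C \<and> cocircuit M D \<and> C \<inter> D = {})"

definition restrict :: "'a matroid \<Rightarrow> 'a set \<Rightarrow> 'a matroid" where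
  "restrict M T = (T, \<lambda>X. indep M X \<and> X \<subseteq> T)"

definition miso :: "'a matroid \<Rightarrow> 'b matroid \<Rightarrow> bool" where
  "miso M M' \<longleftrightarrow> matroid M \<and> matroid M' \<and>
     (\<exists>f. bij_betw f (gr M) (gr M') \<and>
          (\<forall>X. X \<subseteq> gr M \<longrightarrow> (indep M X \<longleftrightarrow> indep M' (f ` X))))"

definition is_gen_par_conn :: "'a matroid \<Rightarrow> 'a matroid \<Rightarrow> 'a matroid \<Rightarrow> bool" where
  "is_gen_par_conn M1 M2 M \<longleftrightarrow> matroid M \<and> gr M = gr M1 \<union> gr M2 \<and>
     (\<forall>Z. flat M Z \<longleftrightarrow> Z \<subseteq> gr M \<and> flat M1 (Z \<inter> gr M1) \<and> flat M2 (Z \<inter> gr M2))"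

definition pg_vectors :: "('b, 'm) ring_scheme \<Rightarrow> nat \<Rightarrow> (nat \<Rightarrow> 'b) set" where
  "pg_vectors R d = {v. (\<forall>i<d. v i \<in> carrier R) \<and> (\<forall>i\<ge>d. v i = \<zero>\<^bsub>R\<^esub>)}"

definition pg_zero :: "('b, 'm) ring_scheme \<Rightarrow> nat \<Rightarrow> 'b" where
  "pg_zero R = (\<lambda>i. \<zero>\<^bsub>R\<^esub>)"

definition pg_line :: "('b, 'm) ring_scheme \<Rightarrow> (nat \<Rightarrow> 'b) \<Rightarrow> (nat \<Rightarrow> 'b) set" where
  "pg_line R v = {(\<lambda>i. a \<otimes>\<^bsub>R\<^esub> v i) | a. a \<in> carrier R}"

definition pg_points :: "('b, 'm) ring_scheme \<Rightarrow> nat \<Rightarrow> (nat \<Rightarrow> 'b) set set" where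
  "pg_points R d = {pg_line R v | v. v \<in> pg_vectors R d \<and> v \<noteq> pg_zero R}"

text \<open>A set of points is independent iff the corresponding lines are linearly
  independent, i.e. their sum is direct.\<close>
definition pg_indep :: "('b, 'm) ring_scheme \<Rightarrow> nat \<Rightarrow> (nat \<Rightarrow> 'b) set set \<Rightarrow> bool" where
  "pg_indep R d P \<longleftrightarrow> P \<subseteq> pg_points R d \<and>
     (\<forall>c. (\<forall>p\<in>P. c p \<in> p) \<and> (\<lambda>i. finsum R (\<lambda>p. c p i) P) = pg_zero R
          \<longrightarrow> (\<forall>p\<in>P. c p = pg_zero R))"

text \<open>PG R d is the projective geometry PG(d-1, R); it has rank d.\<close>
definition PG :: "('b, 'm) ring_scheme \<Rightarrow> nat \<Rightarrow> (nat \<Rightarrow> 'b) set matroid" where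
  "PG R d = (pg_points R d, pg_indep R d)"

text \<open>M is isomorphic to PG(d-1,q) (GF(q) is represented by any field with q elements;
  all such fields are isomorphic, and any one can be put on a subset of nat).\<close>
definition iso_PG :: "nat \<Rightarrow> nat \<Rightarrow> 'a matroid \<Rightarrow> bool" where
  "iso_PG q d M \<longleftrightarrow> (\<exists>R :: nat ring. field R \<and> finite (carrier R) \<and>
       card (carrier R) = q \<and> miso M (PG R d))"

definition is_PG_over :: "nat \<Rightarrow> 'a matroid \<Rightarrow> bool" where
  "is_PG_over q M \<longleftrightarrow> (\<exists>d. iso_PG q d M)"

inductive in_Mq :: "nat \<Rightarrow> 'a matroid \<Rightarrow> bool" for q where
  pg: "is_PG_over q M \<Longrightarrow> in_Mq q M"
| iso: "in_Mq q M \<Longrightarrow> miso M M' \<Longrightarrow> in_Mq q M'"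
| gpc: "in_Mq q M1 \<Longrightarrow> in_Mq q M2 \<Longrightarrow> T = gr M1 \<inter> gr M2 \<Longrightarrow>
        modular_flat M1 T \<Longrightarrow> restrict M1 T = restrict M2 T \<Longrightarrow>
        is_PG_over q (restrict M1 T) \<Longrightarrow> is_gen_par_conn M1 M2 M \<Longrightarrow> in_Mq q M"

definition prime_power :: "nat \<Rightarrow> bool" where
  "prime_power q \<longleftrightarrow> (\<exists>p k. prime p \<and> k \<ge> 1 \<and> q = p ^ k)"

end

(*
  PG(r-1,q) is round: any two points are independent and every line has a third point, while
  the complement of a cocircuit is closed, so two disjoint cocircuits would contain the two
  points of a line whose third point lies in neither.

  Conversely, let M be a round generalized parallel connection of M1 and M2 across T. If
  neither ground set contains the other, then E(M2) and E(M1) \<union> cl2(T) are proper flats of M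
  covering E(M), and cocircuits avoiding them are disjoint. So either M is one of M1, M2, or
  T spans M2. In the latter case M2|T, a copy of PG(r-1,q), is round and spanning, so M2 is
  round and, by induction, also a copy of PG(r-1,q); counting points gives T = E(M2), and
  then M = M1.
*)
theory Submission
  imports Defs
begin

section \<open>Rank, closure and flats\<close>

locale finite_matroid =
  fixes M :: "'a matroid"
  assumes matroid: "matroid M"

lemma finite_matroidI: "matroid M \<Longrightarrow> finite_matroid M"
  by (rule finite_matroid.intro)

context finite_matroid
begin

lemma finite_gr: "finite (gr M)"
  using matroid by (simp add: matroid_def)

lemma indep_empty: "indep M {}"
  using matroid by (simp add: matroid_def)

lemma indep_subset_gr: "indep M X \<Longrightarrow> X \<subseteq> gr M"
  using matroid by (simp add: matroid_def)

lemma indep_subset: "indep M X \<Longrightarrow> Y \<subseteq> X \<Longrightarrow> indep M Y"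
  using matroid unfolding matroid_def by blast

lemma indep_augment:
  "indep M X \<Longrightarrow> indep M Y \<Longrightarrow> card X < card Y \<Longrightarrow> \<exists>e\<in>Y - X. indep M (insert e X)"
  using matroid unfolding matroid_def by blast

lemma indep_finite: "indep M X \<Longrightarrow> finite X"
  using finite_subset[OF indep_subset_gr finite_gr] .

lemma indep_augment_to_card:
  assumes I: "indep M I" and J: "indep M J" and n: "card I \<le> n" "n \<le> card J"
  shows "\<exists>K. I \<subseteq> K \<and> K \<subseteq> I \<union> J \<and> indep M K \<and> card K = n"
  using n
proof (induction n)
  case 0
  then show ?case using I by (intro exI[of _ I]) simp
next
  case (Suc n)
  show ?case
  proof (cases "card I = Suc n")
    case True
    then show ?thesis using I by (intro exI[of _ I]) simp
  next
    case False
    then obtain K where K: "I \<subseteq> K" "K \<subseteq> I \<union> J" "indep M K" "card K = n"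
      using Suc by auto
    then obtain e where e: "e \<in> J - K" "indep M (insert e K)"
      using indep_augment[OF K(3) J] Suc.prems by auto
    then have "card (insert e K) = Suc n" using K(4) indep_finite[OF K(3)] by simp
    then show ?thesis using K e by (intro exI[of _ "insert e K"]) auto
  qed
qed

lemma finite_indep_cards: "finite {card I | I. I \<subseteq> X \<and> indep M I}"
proof (rule finite_subset)
  show "{card I | I. I \<subseteq> X \<and> indep M I} \<subseteq> {..card (gr M)}"
    using card_mono[OF finite_gr indep_subset_gr] by auto
qed simp

lemma card_le_rank: "I \<subseteq> X \<Longrightarrow> indep M I \<Longrightarrow> card I \<le> mrank_of M X"
  unfolding mrank_of_def by (rule Max_ge[OF finite_indep_cards]) auto

lemma ex_indep_card_rank: "\<exists>I. I \<subseteq> X \<and> indep M I \<and> card I = mrank_of M X"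
proof -
  have "{card I | I. I \<subseteq> X \<and> indep M I} \<noteq> {}" using indep_empty by blast
  from Max_in[OF finite_indep_cards this] show ?thesis unfolding mrank_of_def by auto
qed

lemma rank_leI: "(\<And>I. I \<subseteq> X \<Longrightarrow> indep M I \<Longrightarrow> card I \<le> k) \<Longrightarrow> mrank_of M X \<le> k"
  using ex_indep_card_rank by metis

lemma rank_mono: "X \<subseteq> Y \<Longrightarrow> mrank_of M X \<le> mrank_of M Y"
  by (rule rank_leI) (auto intro: card_le_rank)

lemma rank_indep: "indep M I \<Longrightarrow> mrank_of M I = card I"
  by (intro antisym rank_leI card_le_rank) (auto intro: card_mono indep_finite)

lemma card_maximal_indep_eq_rank:
  assumes I: "I \<subseteq> X" "indep M I" and maximal: "\<forall>e\<in>X - I. \<not> indep M (insert e I)"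
  shows "card I = mrank_of M X"
proof (rule ccontr)
  obtain J where J: "J \<subseteq> X" "indep M J" "card J = mrank_of M X" using ex_indep_card_rank by blast
  assume "card I \<noteq> mrank_of M X"
  then have "card I < card J" using card_le_rank[OF I] J by simp
  then show False using indep_augment[OF I(2) J(2)] maximal J(1) by blast
qed

lemma mclosure_subset_gr: "mclosure M X \<subseteq> gr M"
  unfolding mclosure_def by auto

lemma subset_mclosure: "X \<subseteq> gr M \<Longrightarrow> X \<subseteq> mclosure M X"
  unfolding mclosure_def by (auto simp: insert_absorb)

lemma indep_extend_to_rank:
  assumes K: "K \<subseteq> Y" "indep M K"
  shows "\<exists>J. K \<subseteq> J \<and> J \<subseteq> Y \<and> indep M J \<and> card J = mrank_of M Y"
proof -
  obtain J0 where J0: "J0 \<subseteq> Y" "indep M J0" "card J0 = mrank_of M Y"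
    using ex_indep_card_rank by blast
  then have "card K \<le> card J0" using card_le_rank[OF K] by simp
  then obtain J where "K \<subseteq> J" "J \<subseteq> K \<union> J0" "indep M J" "card J = card J0"
    using indep_augment_to_card[OF K(2) J0(2) _ order_refl] by blast
  then show ?thesis using K(1) J0 by (intro exI[of _ J]) auto
qed

lemma indep_insert_if_notin_mclosure:
  assumes J: "J \<subseteq> Y" "indep M J" "card J = mrank_of M Y" and e: "e \<in> gr M" "e \<notin> mclosure M Y"
  shows "indep M (insert e J)"
proof -
  have "mrank_of M (insert e Y) \<noteq> mrank_of M Y" using e unfolding mclosure_def by blast
  moreover have "mrank_of M Y \<le> mrank_of M (insert e Y)" by (rule rank_mono) blast
  ultimately have "card J < mrank_of M (insert e Y)" using J(3) by linarith
  moreover obtain I where I: "I \<subseteq> insert e Y" "indep M I" "card I = mrank_of M (insert e Y)"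
    using ex_indep_card_rank by blast
  ultimately obtain f where f: "f \<in> I - J" "indep M (insert f J)"
    using indep_augment[OF J(2) I(2)] by auto
  have "f = e"
  proof (rule ccontr)
    assume "f \<noteq> e"
    then have "insert f J \<subseteq> Y" using f I(1) J(1) by blast
    then have "card (insert f J) \<le> mrank_of M Y" using f(2) by (rule card_le_rank)
    then show False using f J(3) indep_finite[OF J(2)] by simp
  qed
  then show ?thesis using f(2) by simp
qed

lemma mclosure_mono:
  assumes XY: "X \<subseteq> Y" shows "mclosure M X \<subseteq> mclosure M Y"
proof
  fix e assume "e \<in> mclosure M X"
  then have e: "e \<in> gr M" "mrank_of M (insert e X) = mrank_of M X" unfolding mclosure_def by auto
  obtain K where K: "K \<subseteq> X" "indep M K" "card K = mrank_of M X" using ex_indep_card_rank by blast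
  then obtain J where J: "K \<subseteq> J" "J \<subseteq> Y" "indep M J" "card J = mrank_of M Y"
    using indep_extend_to_rank[of K Y] XY by blast
  show "e \<in> mclosure M Y"
  proof (rule ccontr)
    assume notin: "e \<notin> mclosure M Y"
    then have "e \<notin> Y" using e(1) unfolding mclosure_def by (auto simp: insert_absorb)
    then have "e \<notin> K" using K(1) XY by blast
    moreover have "indep M (insert e K)"
      using indep_subset[OF indep_insert_if_notin_mclosure[OF J(2-4) e(1) notin]] J(1) by blast
    ultimately have "Suc (card K) \<le> mrank_of M (insert e X)"
      using card_le_rank[of "insert e K" "insert e X"] K(1) indep_finite[OF K(2)] by auto
    then show False using e(2) K(3) by simp
  qed
qed

lemma rank_mclosure:
  assumes X: "X \<subseteq> gr M" shows "mrank_of M (mclosure M X) = mrank_of M X"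
proof (rule antisym)
  obtain K where K: "K \<subseteq> X" "indep M K" "card K = mrank_of M X" using ex_indep_card_rank by blast
  show "mrank_of M (mclosure M X) \<le> mrank_of M X"
  proof (rule rank_leI, rule ccontr)
    fix I assume I: "I \<subseteq> mclosure M X" "indep M I" "\<not> card I \<le> mrank_of M X"
    then obtain e where e: "e \<in> I - K" "indep M (insert e K)"
      using indep_augment[OF K(2) I(2)] K(3) by auto
    then have "mrank_of M (insert e X) = mrank_of M X" using I(1) unfolding mclosure_def by auto
    moreover have "card (insert e K) \<le> mrank_of M (insert e X)"
      using K(1) e(2) by (intro card_le_rank) auto
    ultimately show False using K e indep_finite[OF K(2)] by simp
  qed
qed (rule rank_mono[OF subset_mclosure[OF X]])

lemma mclosure_idem:
  assumes X: "X \<subseteq> gr M" shows "mclosure M (mclosure M X) = mclosure M X"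
proof
  show "mclosure M (mclosure M X) \<subseteq> mclosure M X"
  proof
    fix e assume "e \<in> mclosure M (mclosure M X)"
    then have "e \<in> gr M" "mrank_of M (insert e (mclosure M X)) = mrank_of M X"
      using rank_mclosure[OF X] unfolding mclosure_def by auto
    moreover have "mrank_of M (insert e X) \<le> mrank_of M (insert e (mclosure M X))"
      using rank_mono[OF insert_mono[OF subset_mclosure[OF X]]] .
    moreover have "mrank_of M X \<le> mrank_of M (insert e X)" by (rule rank_mono) auto
    ultimately show "e \<in> mclosure M X" unfolding mclosure_def by simp
  qed
qed (rule subset_mclosure[OF mclosure_subset_gr])

lemma flat_mclosure: "X \<subseteq> gr M \<Longrightarrow> flat M (mclosure M X)"
  unfolding flat_def using mclosure_idem mclosure_subset_gr by simp

lemma mclosure_eq_Inter_flats: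
  assumes X: "X \<subseteq> gr M" shows "mclosure M X = \<Inter>{F. flat M F \<and> X \<subseteq> F}"
proof
  show "mclosure M X \<subseteq> \<Inter>{F. flat M F \<and> X \<subseteq> F}"
    using mclosure_mono unfolding flat_def by blast
  show "\<Inter>{F. flat M F \<and> X \<subseteq> F} \<subseteq> mclosure M X"
    using flat_mclosure[OF X] subset_mclosure[OF X] by blast
qed

lemma indep_iff_notin_mclosure:
  "indep M I \<longleftrightarrow> I \<subseteq> gr M \<and> (\<forall>e\<in>I. e \<notin> mclosure M (I - {e}))"
proof safe
  fix e assume I: "indep M I" and e: "e \<in> I" and cl: "e \<in> mclosure M (I - {e})"
  have "indep M (I - {e})" using indep_subset[OF I] by blast
  then have "mrank_of M (I - {e}) < card I"
    using rank_indep card_Diff1_less[OF indep_finite[OF I] e] by simp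
  moreover have "mrank_of M (insert e (I - {e})) = card I"
    using e rank_indep[OF I] by (simp add: insert_absorb)
  ultimately show False using cl unfolding mclosure_def by simp
next
  assume I: "I \<subseteq> gr M" and A: "\<forall>e\<in>I. e \<notin> mclosure M (I - {e})"
  show "indep M I"
  proof (rule ccontr)
    assume "\<not> indep M I"
    obtain K where K: "K \<subseteq> I" "indep M K" "card K = mrank_of M I" using ex_indep_card_rank by blast
    have "K \<noteq> I" using K(2) \<open>\<not> indep M I\<close> by blast
    then obtain e where e: "e \<in> I" "e \<notin> K" using K(1) by blast
    then have "card K \<le> mrank_of M (I - {e})" using K by (intro card_le_rank) auto
    moreover have "mrank_of M (I - {e}) \<le> mrank_of M I" by (rule rank_mono) auto
    ultimately have "mrank_of M (insert e (I - {e})) = mrank_of M (I - {e})"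
      using K e by (simp add: insert_absorb)
    then show False using A I e unfolding mclosure_def by blast
  qed
qed (auto dest: indep_subset_gr)

end

lemma flat_gr: "flat M (gr M)"
  unfolding flat_def mclosure_def by (auto simp: insert_absorb)

lemma matroid_eqI_flats:
  assumes M: "matroid M" and N: "matroid N" and gr_eq: "gr M = gr N"
    and flats_eq: "\<And>Z. flat M Z \<longleftrightarrow> flat N Z"
  shows "M = N"
proof -
  interpret M: finite_matroid M using M by (rule finite_matroidI)
  interpret N: finite_matroid N using N by (rule finite_matroidI)
  have "mclosure M X = mclosure N X" if "X \<subseteq> gr M" for X
    using M.mclosure_eq_Inter_flats[OF that] N.mclosure_eq_Inter_flats that gr_eq flats_eq by simp
  then have "indep M I \<longleftrightarrow> indep N I" for I
    using M.indep_iff_notin_mclosure[of I] N.indep_iff_notin_mclosure[of I] gr_eq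
    by (metis Diff_subset order_trans)
  then show ?thesis
    using gr_eq unfolding gr_def indep_def by (simp add: prod_eq_iff fun_eq_iff)
qed


section \<open>Bases and cocircuits\<close>

lemma cocircuit_subset_gr: "cocircuit M C \<Longrightarrow> C \<subseteq> gr M"
  by (simp add: cocircuit_def codependent_def)

lemma cocircuit_nonempty: "cocircuit M C \<Longrightarrow> C \<noteq> {}"
  by (simp add: cocircuit_def codependent_def)

lemma cocircuit_meets_basis: "cocircuit M C \<Longrightarrow> basis M B \<Longrightarrow> C \<inter> B \<noteq> {}"
  by (simp add: cocircuit_def codependent_def)

lemma codependent_contains_cocircuit:
  assumes "finite X" "codependent M X" shows "\<exists>C\<subseteq>X. cocircuit M C"
  using assms
proof (induction "card X" arbitrary: X rule: less_induct)
  case less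
  show ?case
  proof (cases "cocircuit M X")
    case False
    then obtain D where D: "D \<subset> X" "codependent M D"
      using less.prems unfolding cocircuit_def by blast
    moreover have "card D < card X" "finite D"
      using less.prems(1) D(1) by (auto intro: psubset_card_mono finite_subset)
    ultimately obtain C where "C \<subseteq> D" "cocircuit M C" using less.hyps by blast
    then show ?thesis using D(1) by blast
  qed blast
qed

context finite_matroid
begin

lemma card_le_matroid_rank: "indep M I \<Longrightarrow> card I \<le> matroid_rank M"
  unfolding matroid_rank_def by (rule card_le_rank[OF indep_subset_gr])

lemma basis_card: assumes B: "basis M B" shows "card B = matroid_rank M"
  unfolding matroid_rank_def
proof (rule card_maximal_indep_eq_rank)
  show "indep M B" using B by (simp add: basis_def)
  then show "B \<subseteq> gr M" by (rule indep_subset_gr)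
  show "\<forall>e\<in>gr M - B. \<not> indep M (insert e B)" using B unfolding basis_def by blast
qed

lemma basisI_card: assumes B: "indep M B" "card B = matroid_rank M" shows "basis M B"
  unfolding basis_def
proof (intro conjI allI impI)
  fix X assume X: "indep M X \<and> B \<subseteq> X"
  then have "card X \<le> card B" using card_le_matroid_rank B(2) by simp
  then show "X = B" using X card_seteq[OF indep_finite] by blast
qed (fact B(1))

lemma ex_basis: "\<exists>B. basis M B"
  using ex_indep_card_rank[of "gr M"] basisI_card unfolding matroid_rank_def by blast

lemma cocircuit_ex_basis_inter_singleton:
  assumes C: "cocircuit M C" and x: "x \<in> C"
  shows "\<exists>B. basis M B \<and> B \<inter> C = {x}"
proof -
  have "\<exists>B. basis M B \<and> (C - {x}) \<inter> B = {}"
  proof (cases "C - {x} = {}")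
    case True
    then show ?thesis using ex_basis by blast
  next
    case False
    have "\<not> codependent M (C - {x})" using C x unfolding cocircuit_def by blast
    then show ?thesis using False cocircuit_subset_gr[OF C] unfolding codependent_def by blast
  qed
  then show ?thesis using cocircuit_meets_basis[OF C] by blast
qed

lemma proper_flat_compl_codependent:
  assumes H: "flat M H" "H \<noteq> gr M"
  shows "codependent M (gr M - H)"
  unfolding codependent_def
proof (intro conjI allI impI)
  have Hgr: "H \<subseteq> gr M" using H by (simp add: flat_def)
  then show "gr M - H \<noteq> {}" using H(2) by blast
  fix B assume B: "basis M B"
  show "(gr M - H) \<inter> B \<noteq> {}"
  proof
    assume "(gr M - H) \<inter> B = {}"
    moreover have BI: "indep M B" using B by (simp add: basis_def)
    ultimately have "B \<subseteq> H" using indep_subset_gr by blast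
    then have rank_H: "matroid_rank M \<le> mrank_of M H"
      using card_le_rank[OF _ BI] basis_card[OF B] by simp
    have "mrank_of M (insert e H) = mrank_of M H" if "e \<in> gr M" for e
    proof (rule antisym)
      have "mrank_of M (insert e H) \<le> matroid_rank M"
        unfolding matroid_rank_def using that Hgr by (intro rank_mono) blast
      then show "mrank_of M (insert e H) \<le> mrank_of M H" using rank_H by linarith
    qed (rule rank_mono, blast)
    then have "gr M \<subseteq> H" using H(1) unfolding flat_def mclosure_def by blast
    then show False using Hgr H(2) by blast
  qed
qed blast

lemma hyperplane_compl_cocircuit:
  assumes H: "flat M H" "H \<noteq> gr M"
    and maximal: "\<And>G. flat M G \<Longrightarrow> H \<subset> G \<Longrightarrow> G = gr M"
  shows "cocircuit M (gr M - H)"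
  unfolding cocircuit_def
proof (intro conjI allI impI notI)
  show "codependent M (gr M - H)" using H by (rule proper_flat_compl_codependent)
  fix D assume D: "D \<subset> gr M - H" and "codependent M D"
  obtain e where e: "e \<in> gr M - H" "e \<notin> D" using D by blast
  have eH: "insert e H \<subseteq> gr M" using e H(1) by (auto simp: flat_def)
  then have "H \<subset> mclosure M (insert e H)" using subset_mclosure e by blast
  then have "mclosure M (insert e H) = gr M" using maximal flat_mclosure[OF eH] by blast
  then have "mrank_of M (insert e H) = matroid_rank M"
    using rank_mclosure[OF eH] unfolding matroid_rank_def by simp
  moreover obtain J where J: "J \<subseteq> insert e H" "indep M J" "card J = mrank_of M (insert e H)"
    using ex_indep_card_rank by blast
  ultimately have "basis M J" by (simp add: basisI_card)
  moreover have "D \<inter> J = {}" using J(1) D e by blast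
  ultimately show False using \<open>codependent M D\<close> unfolding codependent_def by blast
qed

lemma flat_disjoint_cocircuit:
  assumes F: "flat M F" "F \<noteq> gr M"
  shows "\<exists>C. cocircuit M C \<and> C \<inter> F = {}"
proof -
  define S where "S = {G. flat M G \<and> F \<subseteq> G \<and> G \<noteq> gr M}"
  have "S \<subseteq> Pow (gr M)" unfolding S_def flat_def by blast
  then have "finite S" using finite_gr by (simp add: finite_subset)
  moreover have "S \<noteq> {}" using F unfolding S_def by blast
  ultimately obtain H where H: "H \<in> S" and maximal: "\<forall>G\<in>S. H \<subseteq> G \<longrightarrow> H = G"
    using finite_has_maximal by blast
  have "cocircuit M (gr M - H)"
  proof (rule hyperplane_compl_cocircuit)
    show "flat M H" "H \<noteq> gr M" using H unfolding S_def by simp_all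
    fix G assume G: "flat M G" "H \<subset> G"
    show "G = gr M"
    proof (rule ccontr)
      assume "G \<noteq> gr M"
      then have "G \<in> S" using G H unfolding S_def by blast
      then show False using maximal G(2) by blast
    qed
  qed
  moreover have "(gr M - H) \<inter> F = {}" using H unfolding S_def by blast
  ultimately show ?thesis by blast
qed

text \<open>In other words, the complement of a cocircuit is closed.\<close>
lemma dependent_insert_notin_cocircuit:
  assumes C: "cocircuit M C" and I: "indep M I" "I \<inter> C = {}" and dep: "\<not> indep M (insert x I)"
  shows "x \<notin> C"
proof
  assume "x \<in> C"
  then obtain B where B: "basis M B" "B \<inter> C = {x}"
    using cocircuit_ex_basis_inter_singleton[OF C] by blast
  define K where "K = B - {x}"
  have BI: "indep M B" using B(1) by (simp add: basis_def)
  have xB: "x \<in> B" using B(2) by blast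
  have cardB: "card B = Suc (card K)"
    unfolding K_def using card_Suc_Diff1[OF indep_finite[OF BI] xB] by simp
  have small: "card J \<le> card K" if J: "J \<subseteq> K \<union> I" "indep M J" for J
  proof (rule ccontr)
    assume "\<not> card J \<le> card K"
    then have "card K < card J" by simp
    moreover have KI: "indep M K" using indep_subset[OF BI] unfolding K_def by blast
    ultimately obtain e where e: "e \<in> J - K" "indep M (insert e K)"
      using indep_augment[OF KI J(2)] by blast
    then have "card (insert e K) = matroid_rank M"
      using cardB basis_card[OF B(1)] indep_finite[OF KI] by simp
    then have "basis M (insert e K)" using basisI_card e(2) by blast
    moreover have "C \<inter> insert e K = {}" using e J(1) I(2) B(2) unfolding K_def by blast
    ultimately show False using cocircuit_meets_basis[OF C] by blast
  qed
  have "card I \<le> card B" using card_le_matroid_rank[OF I(1)] basis_card[OF B(1)] by simp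
  then obtain L where L: "I \<subseteq> L" "L \<subseteq> I \<union> B" "indep M L" "card L = card B"
    using indep_augment_to_card[OF I(1) BI _ order_refl] by blast
  show False
  proof (cases "x \<in> L")
    case True
    then show False using indep_subset[OF L(3)] L(1) dep by blast
  next
    case False
    then have "L \<subseteq> K \<union> I" using L(2) unfolding K_def by blast
    then show False using small[OF _ L(3)] L(4) cardB by simp
  qed
qed

lemma not_round_if_proper_flats_cover:
  assumes F: "flat M F" "F \<noteq> gr M" and G: "flat M G" "G \<noteq> gr M" and cover: "F \<union> G = gr M"
  shows "\<not> round M"
proof -
  obtain C where C: "cocircuit M C" "C \<inter> F = {}" using flat_disjoint_cocircuit[OF F] by blast
  obtain D where D: "cocircuit M D" "D \<inter> G = {}" using flat_disjoint_cocircuit[OF G] by blast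
  have "C \<inter> D = {}" using C D cocircuit_subset_gr[OF C(1)] cover by blast
  then show ?thesis unfolding round_def using C D by blast
qed

lemma round_if_three_point_lines:
  assumes pairs: "\<And>x y. x \<in> gr M \<Longrightarrow> y \<in> gr M \<Longrightarrow> x \<noteq> y \<Longrightarrow> indep M {x, y}"
    and third: "\<And>x y. x \<in> gr M \<Longrightarrow> y \<in> gr M \<Longrightarrow> x \<noteq> y \<Longrightarrow>
                   \<exists>z\<in>gr M. z \<noteq> x \<and> z \<noteq> y \<and> \<not> indep M {x, y, z}"
  shows "round M"
  unfolding round_def
proof (intro notI, elim exE conjE)
  fix C D assume C: "cocircuit M C" and D: "cocircuit M D" and CD: "C \<inter> D = {}"
  obtain x y where x: "x \<in> C" and y: "y \<in> D"
    using cocircuit_nonempty[OF C] cocircuit_nonempty[OF D] by blast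
  then have xy: "x \<in> gr M" "y \<in> gr M" "x \<noteq> y"
    using cocircuit_subset_gr[OF C] cocircuit_subset_gr[OF D] CD by auto
  then obtain z where z: "z \<in> gr M" "z \<noteq> x" "z \<noteq> y" "\<not> indep M {x, y, z}"
    using third by blast
  show False
  proof (cases "z \<in> C")
    case False
    have "{y, z} \<inter> C = {}" using y CD False by blast
    moreover have "\<not> indep M (insert x {y, z})" using z(4) by simp
    ultimately have "x \<notin> C"
      by (rule dependent_insert_notin_cocircuit[OF C pairs[OF xy(2) z(1) z(3)[symmetric]]])
    then show False using x by contradiction
  next
    case True
    have "{x, z} \<inter> D = {}" using x CD True by blast
    moreover have "\<not> indep M (insert y {x, z})" using z(4) by (metis insert_commute)
    ultimately have "y \<notin> D"
      by (rule dependent_insert_notin_cocircuit[OF D pairs[OF xy(1) z(1) z(2)[symmetric]]])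
    then show False using y by contradiction
  qed
qed

end


section \<open>Isomorphisms\<close>

lemma miso_sym: assumes "miso M M'" shows "miso M' M"
proof -
  obtain f where f: "bij_betw f (gr M) (gr M')"
    and h: "\<forall>X. X \<subseteq> gr M \<longrightarrow> (indep M X \<longleftrightarrow> indep M' (f ` X))"
    using assms unfolding miso_def by blast
  define g where "g = inv_into (gr M) f"
  have g: "bij_betw g (gr M') (gr M)" unfolding g_def by (rule bij_betw_inv_into[OF f])
  have "indep M' Y \<longleftrightarrow> indep M (g ` Y)" if Y: "Y \<subseteq> gr M'" for Y
  proof -
    have "g ` Y \<subseteq> gr M" using g Y bij_betw_imp_surj_on by blast
    moreover have "f ` g ` Y = Y"
      unfolding g_def using image_inv_into_cancel[OF bij_betw_imp_surj_on[OF f] Y] .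
    ultimately show ?thesis using h by metis
  qed
  then show ?thesis using assms g unfolding miso_def by blast
qed

lemma miso_trans: assumes "miso M M'" "miso M' M''" shows "miso M M''"
proof -
  obtain f where f: "bij_betw f (gr M) (gr M')"
    and h: "\<forall>X. X \<subseteq> gr M \<longrightarrow> (indep M X \<longleftrightarrow> indep M' (f ` X))"
    using assms(1) unfolding miso_def by blast
  obtain f' where f': "bij_betw f' (gr M') (gr M'')"
    and h': "\<forall>X. X \<subseteq> gr M' \<longrightarrow> (indep M' X \<longleftrightarrow> indep M'' (f' ` X))"
    using assms(2) unfolding miso_def by blast
  have "indep M X \<longleftrightarrow> indep M'' ((f' \<circ> f) ` X)" if X: "X \<subseteq> gr M" for X
  proof -
    have "f ` X \<subseteq> gr M'" using X f by (auto simp: bij_betw_def)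
    have "indep M X \<longleftrightarrow> indep M' (f ` X)" using h X by blast
    also have "\<dots> \<longleftrightarrow> indep M'' (f' ` f ` X)" using h' \<open>f ` X \<subseteq> gr M'\<close> by blast
    finally show ?thesis by (simp add: image_comp)
  qed
  then show ?thesis using assms bij_betw_trans[OF f f'] unfolding miso_def by blast
qed

lemma miso_rank_le: assumes "miso M M'" shows "matroid_rank M \<le> matroid_rank M'"
proof -
  obtain f where f: "bij_betw f (gr M) (gr M')"
    and h: "\<forall>X. X \<subseteq> gr M \<longrightarrow> (indep M X \<longleftrightarrow> indep M' (f ` X))"
    and M: "matroid M" and M': "matroid M'"
    using assms unfolding miso_def by blast
  obtain I where I: "I \<subseteq> gr M" "indep M I" "card I = matroid_rank M"
    using finite_matroid.ex_indep_card_rank[OF finite_matroidI[OF M]]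
    unfolding matroid_rank_def by blast
  have "card (f ` I) = card I"
    using card_image bij_betw_imp_inj_on[OF f] I(1) inj_on_subset by blast
  moreover have "indep M' (f ` I)" using h I by blast
  ultimately show ?thesis
    using finite_matroid.card_le_matroid_rank[OF finite_matroidI[OF M']] I(3) by metis
qed

lemma miso_rank: "miso M M' \<Longrightarrow> matroid_rank M = matroid_rank M'"
  using miso_rank_le miso_sym le_antisym by metis

lemma miso_codependent_image:
  assumes iso: "miso M M'" and f: "bij_betw f (gr M) (gr M')"
    and h: "\<forall>X. X \<subseteq> gr M \<longrightarrow> (indep M X \<longleftrightarrow> indep M' (f ` X))"
    and X: "X \<subseteq> gr M"
  shows "codependent M' (f ` X) \<longleftrightarrow> codependent M X"
proof -
  interpret M: finite_matroid M using iso by (simp add: miso_def finite_matroidI)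
  interpret M': finite_matroid M' using iso by (simp add: miso_def finite_matroidI)
  have inj: "inj_on f (gr M)" and im: "f ` gr M = gr M'"
    using f by (auto simp: bij_betw_def)
  have basis_image: "basis M B \<longleftrightarrow> basis M' (f ` B)" if B: "B \<subseteq> gr M" for B
  proof -
    have "card (f ` B) = card B" using inj_on_subset[OF inj B] by (rule card_image)
    then show ?thesis
      using M.basis_card M'.basis_card M.basisI_card M'.basisI_card miso_rank[OF iso] h B
      unfolding basis_def by metis
  qed
  have "(\<forall>B. basis M B \<longrightarrow> X \<inter> B \<noteq> {}) \<longleftrightarrow> (\<forall>B'. basis M' B' \<longrightarrow> f ` X \<inter> B' \<noteq> {})"
  proof safe
    fix B' assume meets: "\<forall>B. basis M B \<longrightarrow> X \<inter> B \<noteq> {}" and B': "basis M' B'"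
      and disj: "f ` X \<inter> B' = {}"
    have "B' \<subseteq> f ` gr M" using M'.indep_subset_gr[of B'] B' im by (simp add: basis_def)
    then obtain B where B: "B \<subseteq> gr M" "B' = f ` B" unfolding subset_image_iff by blast
    then have "X \<inter> B \<noteq> {}" using meets basis_image B' by blast
    then show False using disj B(2) by blast
  next
    fix B assume meets: "\<forall>B'. basis M' B' \<longrightarrow> f ` X \<inter> B' \<noteq> {}" and B: "basis M B"
      and disj: "X \<inter> B = {}"
    have Bgr: "B \<subseteq> gr M" using M.indep_subset_gr B by (simp add: basis_def)
    then have "f ` X \<inter> f ` B \<noteq> {}" using meets basis_image B by blast
    then show False using disj inj_on_image_Int[OF inj X Bgr] by simp
  qed
  then show ?thesis using X im unfolding codependent_def by blast
qed

lemma miso_cocircuit_image: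
  assumes iso: "miso M M'" and f: "bij_betw f (gr M) (gr M')"
    and h: "\<forall>X. X \<subseteq> gr M \<longrightarrow> (indep M X \<longleftrightarrow> indep M' (f ` X))"
    and C: "cocircuit M C"
  shows "cocircuit M' (f ` C)"
  unfolding cocircuit_def
proof (intro conjI allI impI notI)
  have Cgr: "C \<subseteq> gr M" by (rule cocircuit_subset_gr[OF C])
  then show "codependent M' (f ` C)"
    using miso_codependent_image[OF iso f h] C unfolding cocircuit_def by blast
  fix D' assume D': "D' \<subset> f ` C" and "codependent M' D'"
  define D where "D = {c \<in> C. f c \<in> D'}"
  have "f ` D = D'" "D \<subset> C" using D' unfolding D_def by blast+
  then have "codependent M D"
    using miso_codependent_image[OF iso f h, of D] Cgr \<open>codependent M' D'\<close> by auto
  then show False using C \<open>D \<subset> C\<close> unfolding cocircuit_def by blast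
qed

lemma miso_round: assumes iso: "miso M M'" and round: "round M'" shows "round M"
  unfolding round_def
proof (intro notI, elim exE conjE)
  obtain f where f: "bij_betw f (gr M) (gr M')"
    and h: "\<forall>X. X \<subseteq> gr M \<longrightarrow> (indep M X \<longleftrightarrow> indep M' (f ` X))"
    using iso unfolding miso_def by blast
  fix C D assume C: "cocircuit M C" and D: "cocircuit M D" and CD: "C \<inter> D = {}"
  have "f ` C \<inter> f ` D = {}"
    using inj_on_image_Int[OF bij_betw_imp_inj_on[OF f] cocircuit_subset_gr[OF C]
        cocircuit_subset_gr[OF D]] CD by simp
  then show False
    using miso_cocircuit_image[OF iso f h] C D round unfolding round_def by blast
qed

lemma iso_PG_miso: "iso_PG q d M \<Longrightarrow> miso M M' \<Longrightarrow> iso_PG q d M'"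
  unfolding iso_PG_def using miso_sym miso_trans by metis


section \<open>Restrictions and generalized parallel connections\<close>

lemma gr_restrict [simp]: "gr (restrict M S) = S"
  by (simp add: gr_def restrict_def)

lemma indep_restrict [simp]: "indep (restrict M S) X \<longleftrightarrow> indep M X \<and> X \<subseteq> S"
  by (simp add: indep_def restrict_def)

lemma rank_restrict: "X \<subseteq> S \<Longrightarrow> mrank_of (restrict M S) X = mrank_of M X"
  unfolding mrank_of_def by (metis (lifting) indep_restrict order_trans)

context finite_matroid
begin

lemma matroid_restrict: assumes S: "S \<subseteq> gr M" shows "matroid (restrict M S)"
  unfolding matroid_def
proof (intro conjI allI impI)
  show "finite (gr (restrict M S))" using finite_subset[OF S finite_gr] by simp
  fix X Y
  show "indep (restrict M S) X \<and> indep (restrict M S) Y \<and> card X < card Y \<Longrightarrow>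
      \<exists>e\<in>Y - X. indep (restrict M S) (insert e X)"
    using indep_augment by fastforce
qed (auto simp: indep_empty intro: indep_subset)

lemma restrict_gr: "restrict M (gr M) = M"
  using indep_subset_gr unfolding restrict_def gr_def indep_def by (auto simp: prod_eq_iff)

lemma mclosure_restrict:
  assumes S: "S \<subseteq> gr M" and X: "X \<subseteq> S"
  shows "mclosure (restrict M S) X = mclosure M X \<inter> S"
  using S X unfolding mclosure_def by (auto simp: rank_restrict)

lemma flat_restrict:
  assumes S: "S \<subseteq> gr M" and Z: "flat M Z"
  shows "flat (restrict M S) (Z \<inter> S)"
proof -
  have "mclosure M (Z \<inter> S) \<subseteq> Z" using mclosure_mono[of "Z \<inter> S" Z] Z by (auto simp: flat_def)
  moreover have "Z \<inter> S \<subseteq> mclosure M (Z \<inter> S)" using S by (intro subset_mclosure) blast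
  ultimately show ?thesis unfolding flat_def using mclosure_restrict[OF S] by auto
qed

lemma matroid_rank_restrict_spanning:
  assumes "S \<subseteq> gr M" "mclosure M S = gr M"
  shows "matroid_rank (restrict M S) = matroid_rank M"
  using rank_mclosure[OF assms(1)] assms(2) unfolding matroid_rank_def by (simp add: rank_restrict)

text \<open>A basis of a spanning restriction is a basis of the matroid, so every cocircuit
  meets the restricted ground set in a codependent set of the restriction.\<close>
lemma round_if_spanning_restrict_round:
  assumes S: "S \<subseteq> gr M" and span: "mclosure M S = gr M" and round: "round (restrict M S)"
  shows "round M"
  unfolding round_def
proof (intro notI, elim exE conjE)
  interpret MS: finite_matroid "restrict M S" using matroid_restrict[OF S] by (rule finite_matroidI)
  have basis: "basis M B" if "basis (restrict M S) B" for B
    using that MS.basis_card basisI_card matroid_rank_restrict_spanning[OF S span]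
    by (auto simp: basis_def)
  have codep: "codependent (restrict M S) (C \<inter> S)" if C: "cocircuit M C" for C
  proof -
    have meets: "C \<inter> S \<inter> B \<noteq> {}" if "basis (restrict M S) B" for B
      using cocircuit_meets_basis[OF C basis[OF that]] that by (auto simp: basis_def)
    then show ?thesis using MS.ex_basis unfolding codependent_def by auto
  qed
  have "finite S" using finite_subset[OF S finite_gr] .
  fix C D assume C: "cocircuit M C" and D: "cocircuit M D" and CD: "C \<inter> D = {}"
  obtain C0 D0 where "C0 \<subseteq> C \<inter> S" "cocircuit (restrict M S) C0"
      and "D0 \<subseteq> D \<inter> S" "cocircuit (restrict M S) D0"
    using codependent_contains_cocircuit[OF _ codep] C D \<open>finite S\<close> by (meson finite_Int)
  then show False using round CD unfolding round_def by blast
qed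

end

lemma gen_par_conn_commute: "is_gen_par_conn M1 M2 M \<Longrightarrow> is_gen_par_conn M2 M1 M"
  unfolding is_gen_par_conn_def by blast

lemma gen_par_conn_restrict_eq:
  assumes N: "matroid N" and S: "S \<subseteq> gr N" and conn: "is_gen_par_conn (restrict N S) N M"
  shows "M = N"
proof (rule matroid_eqI_flats)
  interpret N: finite_matroid N using N by (rule finite_matroidI)
  show "matroid M" and gr_eq: "gr M = gr N" using conn S unfolding is_gen_par_conn_def by auto
  have flat_M: "flat M Z \<longleftrightarrow> Z \<subseteq> gr N \<and> flat (restrict N S) (Z \<inter> S) \<and> flat N (Z \<inter> gr N)" for Z
    using conn gr_eq unfolding is_gen_par_conn_def by simp
  show "flat M Z \<longleftrightarrow> flat N Z" for Z
  proof
    assume "flat M Z"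
    then have "Z \<subseteq> gr N" "flat N (Z \<inter> gr N)" using flat_M by blast+
    then show "flat N Z" by (simp add: Int_absorb2)
  next
    assume "flat N Z"
    moreover have "Z \<subseteq> gr N" using \<open>flat N Z\<close> by (simp add: flat_def)
    ultimately show "flat M Z" using flat_M N.flat_restrict[OF S] by (simp add: Int_absorb2)
  qed
qed fact

lemma round_gen_par_conn_cases:
  assumes M2: "matroid M2" and conn: "is_gen_par_conn M1 M2 M"
    and T: "T = gr M1 \<inter> gr M2" and flat_T: "flat M1 T" and round: "round M"
  shows "gr M1 \<subseteq> gr M2 \<or> mclosure M2 T = gr M2"
proof (rule ccontr)
  interpret M2: finite_matroid M2 using M2 by (rule finite_matroidI)
  assume neither: "\<not> (gr M1 \<subseteq> gr M2 \<or> mclosure M2 T = gr M2)"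
  have M: "matroid M" and gr_M: "gr M = gr M1 \<union> gr M2"
    using conn unfolding is_gen_par_conn_def by auto
  have T2: "T \<subseteq> gr M2" using T by blast
  let ?G = "gr M1 \<union> mclosure M2 T"
  have "?G \<inter> gr M2 = mclosure M2 T"
    using T M2.mclosure_subset_gr M2.subset_mclosure[OF T2] by blast
  then have "flat M ?G"
    using conn M2.flat_mclosure[OF T2] M2.mclosure_subset_gr flat_gr[of M1]
    unfolding is_gen_par_conn_def by (auto simp: Int_absorb2)
  moreover have "flat M (gr M2)"
    using conn flat_T flat_gr[of M2] T unfolding is_gen_par_conn_def by (auto simp: Int_commute)
  moreover have "?G \<noteq> gr M"
    using neither gr_M T M2.mclosure_subset_gr M2.subset_mclosure[OF T2] by blast
  moreover have "gr M2 \<noteq> gr M" using neither gr_M by blast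
  moreover have "gr M2 \<union> ?G = gr M" using gr_M M2.mclosure_subset_gr by blast
  ultimately show False
    using finite_matroid.not_round_if_proper_flats_cover[OF finite_matroidI[OF M]] round by blast
qed


section \<open>Projective geometries\<close>

context abelian_monoid
begin

lemma finsum_pair:
  "a \<noteq> b \<Longrightarrow> f a \<in> carrier G \<Longrightarrow> f b \<in> carrier G \<Longrightarrow> finsum G f {a, b} = f a \<oplus> f b"
  by (simp add: finsum_insert Pi_def)

lemma finsum_triple:
  "a \<noteq> b \<Longrightarrow> a \<noteq> c \<Longrightarrow> b \<noteq> c \<Longrightarrow> f a \<in> carrier G \<Longrightarrow> f b \<in> carrier G \<Longrightarrow> f c \<in> carrier G
    \<Longrightarrow> finsum G f {a, b, c} = f a \<oplus> (f b \<oplus> f c)"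
  by (simp add: finsum_insert Pi_def)

end

context field
begin

lemma field_l_inv: "a \<in> carrier R \<Longrightarrow> a \<noteq> \<zero> \<Longrightarrow> inv a \<in> carrier R \<and> inv a \<otimes> a = \<one>"
  using field_Units Units_inv_closed Units_l_inv by auto

lemma pg_vectors_carrier: "v \<in> pg_vectors R d \<Longrightarrow> v i \<in> carrier R"
  unfolding pg_vectors_def by (cases "i < d") auto

lemma pg_zero_apply [simp]: "pg_zero R i = \<zero>"
  by (simp add: pg_zero_def)

lemma mem_pg_line_iff: "w \<in> pg_line R v \<longleftrightarrow> (\<exists>a\<in>carrier R. w = (\<lambda>i. a \<otimes> v i))"
  unfolding pg_line_def by auto

lemma pg_line_subset_vectors: "v \<in> pg_vectors R d \<Longrightarrow> pg_line R v \<subseteq> pg_vectors R d"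
  unfolding pg_line_def pg_vectors_def by auto

lemma self_mem_pg_line: assumes "v \<in> pg_vectors R d" shows "v \<in> pg_line R v"
proof -
  have "v = (\<lambda>i. \<one> \<otimes> v i)" using pg_vectors_carrier[OF assms] by simp
  then show ?thesis unfolding mem_pg_line_iff by blast
qed

lemma pg_line_smult:
  assumes v: "v \<in> pg_vectors R d" and c: "c \<in> carrier R" "c \<noteq> \<zero>"
  shows "pg_line R (\<lambda>i. c \<otimes> v i) = pg_line R v"
proof
  have vc: "v i \<in> carrier R" for i using pg_vectors_carrier[OF v] .
  show "pg_line R (\<lambda>i. c \<otimes> v i) \<subseteq> pg_line R v"
  proof
    fix x assume "x \<in> pg_line R (\<lambda>i. c \<otimes> v i)"
    then obtain a where a: "a \<in> carrier R" "x = (\<lambda>i. a \<otimes> (c \<otimes> v i))"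
      unfolding mem_pg_line_iff by blast
    then have "x = (\<lambda>i. (a \<otimes> c) \<otimes> v i)" using c vc by (simp add: m_assoc)
    then show "x \<in> pg_line R v" unfolding mem_pg_line_iff using a c by blast
  qed
  show "pg_line R v \<subseteq> pg_line R (\<lambda>i. c \<otimes> v i)"
  proof
    fix x assume "x \<in> pg_line R v"
    then obtain a where a: "a \<in> carrier R" "x = (\<lambda>i. a \<otimes> v i)" unfolding mem_pg_line_iff by blast
    have ic: "inv c \<in> carrier R" "inv c \<otimes> c = \<one>" using field_l_inv c by auto
    have "(a \<otimes> inv c) \<otimes> (c \<otimes> v i) = a \<otimes> ((inv c \<otimes> c) \<otimes> v i)" for i
      using a(1) ic(1) c(1) vc[of i] by algebra
    then have "x = (\<lambda>i. (a \<otimes> inv c) \<otimes> (c \<otimes> v i))" using a(2) ic(2) vc by simp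
    then show "x \<in> pg_line R (\<lambda>i. c \<otimes> v i)" unfolding mem_pg_line_iff using a ic by blast
  qed
qed

lemma pg_line_eq_if_mem:
  assumes v: "v \<in> pg_vectors R d" and w: "w \<in> pg_line R v" "w \<noteq> pg_zero R"
  shows "pg_line R w = pg_line R v"
proof -
  obtain c where c: "c \<in> carrier R" "w = (\<lambda>i. c \<otimes> v i)"
    using w(1) unfolding mem_pg_line_iff by blast
  have "c \<noteq> \<zero>"
  proof
    assume "c = \<zero>"
    then have "w = pg_zero R" using c(2) pg_vectors_carrier[OF v] by (simp add: pg_zero_def)
    then show False using w(2) by contradiction
  qed
  then show ?thesis using pg_line_smult[OF v c(1)] c(2) by simp
qed

lemma pg_pointE:
  assumes "p \<in> pg_points R d"
  obtains v where "v \<in> pg_vectors R d" "v \<noteq> pg_zero R" "p = pg_line R v"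
  using assms unfolding pg_points_def by blast

lemma pg_point_carrier: assumes "p \<in> pg_points R d" "x \<in> p" shows "x i \<in> carrier R"
  using assms pg_line_subset_vectors pg_vectors_carrier by (elim pg_pointE) blast

lemma pg_indepD:
  assumes "pg_indep R d P" "\<forall>p\<in>P. c p \<in> p" "(\<lambda>i. finsum R (\<lambda>p. c p i) P) = pg_zero R" "p \<in> P"
  shows "c p = pg_zero R"
  using assms unfolding pg_indep_def by blast

lemma pg_line_combination_trivial:
  assumes u: "u \<in> pg_vectors R d" "u \<noteq> pg_zero R" and v: "v \<in> pg_vectors R d" "v \<noteq> pg_zero R"
    and uv: "pg_line R u \<noteq> pg_line R v" and ab: "a \<in> carrier R" "b \<in> carrier R"
    and comb: "\<And>i. a \<otimes> u i \<oplus> b \<otimes> v i = \<zero>"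
  shows "a = \<zero> \<and> b = \<zero>"
proof -
  have uc: "u i \<in> carrier R" and vc: "v i \<in> carrier R" for i
    using pg_vectors_carrier u(1) v(1) by auto
  have "a = \<zero>"
  proof (rule ccontr)
    assume "a \<noteq> \<zero>"
    then have ia: "inv a \<in> carrier R" "inv a \<otimes> a = \<one>" using field_l_inv ab(1) by auto
    have "u i = (\<ominus> (inv a \<otimes> b)) \<otimes> v i" for i
    proof -
      have "u i = inv a \<otimes> (a \<otimes> u i)" using ia ab(1) uc[of i] by (simp add: m_assoc[symmetric])
      also have "\<dots> = inv a \<otimes> \<ominus> (b \<otimes> v i)"
        using minus_equality[OF comb[of i]] ab uc[of i] vc[of i] by simp
      also have "\<dots> = (\<ominus> (inv a \<otimes> b)) \<otimes> v i" using ia(1) ab(2) vc[of i] by algebra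
      finally show ?thesis .
    qed
    then have "u \<in> pg_line R v" unfolding mem_pg_line_iff using ia(1) ab(2) by blast
    then show False using pg_line_eq_if_mem[OF v(1) _ u(2)] uv by simp
  qed
  moreover obtain j where "v j \<noteq> \<zero>" using v(2) by (auto simp: pg_zero_def)
  moreover have "b \<otimes> v j = \<zero>" using comb[of j] \<open>a = \<zero>\<close> uc[of j] vc[of j] ab(2) by simp
  ultimately show ?thesis using integral_iff ab(2) vc by blast
qed

lemma pg_indep_pair:
  assumes p: "p \<in> pg_points R d" and q: "q \<in> pg_points R d" and pq: "p \<noteq> q"
  shows "pg_indep R d {p, q}"
proof -
  obtain u where u: "u \<in> pg_vectors R d" "u \<noteq> pg_zero R" "p = pg_line R u"
    using p by (rule pg_pointE)
  obtain v where v: "v \<in> pg_vectors R d" "v \<noteq> pg_zero R" "q = pg_line R v"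
    using q by (rule pg_pointE)
  have uc: "u i \<in> carrier R" and vc: "v i \<in> carrier R" for i
    using pg_vectors_carrier u(1) v(1) by auto
  have "c p = pg_zero R \<and> c q = pg_zero R"
    if c: "\<forall>t\<in>{p, q}. c t \<in> t" and sum: "(\<lambda>i. finsum R (\<lambda>t. c t i) {p, q}) = pg_zero R" for c
  proof -
    have "c p \<in> pg_line R u" "c q \<in> pg_line R v" using c u(3) v(3) by simp_all
    then obtain a b where a: "a \<in> carrier R" "c p = (\<lambda>i. a \<otimes> u i)"
      and b: "b \<in> carrier R" "c q = (\<lambda>i. b \<otimes> v i)"
      unfolding mem_pg_line_iff by blast
    have "a \<otimes> u i \<oplus> b \<otimes> v i = \<zero>" for i
    proof -
      have "finsum R (\<lambda>t. c t i) {p, q} = c p i \<oplus> c q i"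
        using pq a b uc vc by (intro finsum_pair) simp_all
      then show ?thesis using fun_cong[OF sum, of i] a(2) b(2) by simp
    qed
    then have "a = \<zero> \<and> b = \<zero>"
      using pg_line_combination_trivial[OF u(1,2) v(1,2) _ a(1) b(1)] pq u(3) v(3) by blast
    then show ?thesis using a(2) b(2) uc vc by (simp add: pg_zero_def)
  qed
  then show ?thesis unfolding pg_indep_def using p q by blast
qed

lemma pg_line_add_ne:
  assumes u: "u \<in> pg_vectors R d" "u \<noteq> pg_zero R" and v: "v \<in> pg_vectors R d" "v \<noteq> pg_zero R"
    and uv: "pg_line R u \<noteq> pg_line R v"
  shows "pg_line R (\<lambda>i. u i \<oplus> v i) \<noteq> pg_line R u"
proof
  have uc: "u i \<in> carrier R" and vc: "v i \<in> carrier R" for i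
    using pg_vectors_carrier u(1) v(1) by auto
  assume eq: "pg_line R (\<lambda>i. u i \<oplus> v i) = pg_line R u"
  have "(\<lambda>i. u i \<oplus> v i) \<in> pg_vectors R d" using u(1) v(1) unfolding pg_vectors_def by auto
  then have "(\<lambda>i. u i \<oplus> v i) \<in> pg_line R u" using self_mem_pg_line eq by metis
  then obtain a where a: "a \<in> carrier R" "(\<lambda>i. u i \<oplus> v i) = (\<lambda>i. a \<otimes> u i)"
    unfolding mem_pg_line_iff by blast
  have "(\<one> \<ominus> a) \<otimes> u i \<oplus> \<one> \<otimes> v i = \<zero>" for i
  proof -
    have "(\<one> \<ominus> a) \<otimes> u i \<oplus> \<one> \<otimes> v i = (u i \<oplus> v i) \<ominus> a \<otimes> u i"
      using a(1) uc[of i] vc[of i] by algebra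
    also have "u i \<oplus> v i = a \<otimes> u i" using a(2) unfolding fun_eq_iff by blast
    finally show ?thesis using a(1) uc[of i] by (simp add: a_minus_def r_neg)
  qed
  then have "\<one> \<ominus> a = \<zero> \<and> \<one> = \<zero>"
    by (rule pg_line_combination_trivial[OF u v uv minus_closed[OF one_closed a(1)] one_closed])
  then show False by simp
qed

lemma pg_not_indep_add:
  assumes u: "u \<in> pg_vectors R d" "u \<noteq> pg_zero R" and v: "v \<in> pg_vectors R d"
    and w: "w = (\<lambda>i. u i \<oplus> v i)"
    and distinct: "pg_line R u \<noteq> pg_line R v" "pg_line R w \<noteq> pg_line R u"
      "pg_line R w \<noteq> pg_line R v"
  shows "\<not> pg_indep R d {pg_line R u, pg_line R v, pg_line R w}"
proof
  let ?p = "pg_line R u" and ?q = "pg_line R v" and ?z = "pg_line R w"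
  have uc: "u i \<in> carrier R" and vc: "v i \<in> carrier R" for i
    using pg_vectors_carrier u(1) v(1) by auto
  have "w \<in> pg_vectors R d" using u(1) v(1) unfolding w pg_vectors_def by auto
  assume indep: "pg_indep R d {?p, ?q, ?z}"
  define c where "c t = (if t = ?p then u else if t = ?q then v else (\<lambda>i. (\<ominus> \<one>) \<otimes> w i))" for t
  have c: "c ?p = u" "c ?q = v" "c ?z = (\<lambda>i. (\<ominus> \<one>) \<otimes> w i)" unfolding c_def using distinct by auto
  have "c ?z \<in> ?z" using c(3) unfolding mem_pg_line_iff by (intro bexI[of _ "\<ominus> \<one>"]) simp_all
  then have "\<forall>t\<in>{?p, ?q, ?z}. c t \<in> t"
    using c self_mem_pg_line[OF u(1)] self_mem_pg_line[OF v(1)] by auto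
  moreover have "(\<lambda>i. finsum R (\<lambda>t. c t i) {?p, ?q, ?z}) = pg_zero R"
  proof
    fix i
    have "finsum R (\<lambda>t. c t i) {?p, ?q, ?z} = u i \<oplus> (v i \<oplus> (\<ominus> \<one>) \<otimes> (u i \<oplus> v i))"
      using finsum_triple[of ?p ?q ?z "\<lambda>t. c t i"] distinct c uc vc by (simp add: w)
    also have "\<dots> = \<zero>" using uc[of i] vc[of i] by algebra
    finally show "finsum R (\<lambda>t. c t i) {?p, ?q, ?z} = pg_zero R i" by simp
  qed
  ultimately have "c ?p = pg_zero R" using indep by (intro pg_indepD) auto
  then show False using c(1) u(2) by simp
qed

text \<open>The third point of the line through the points spanned by u and v is spanned by u + v.\<close>
lemma pg_third_point:
  assumes p: "p \<in> pg_points R d" and q: "q \<in> pg_points R d" and pq: "p \<noteq> q"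
  shows "\<exists>z\<in>pg_points R d. z \<noteq> p \<and> z \<noteq> q \<and> \<not> pg_indep R d {p, q, z}"
proof -
  obtain u where u: "u \<in> pg_vectors R d" "u \<noteq> pg_zero R" "p = pg_line R u"
    using p by (rule pg_pointE)
  obtain v where v: "v \<in> pg_vectors R d" "v \<noteq> pg_zero R" "q = pg_line R v"
    using q by (rule pg_pointE)
  have uc: "u i \<in> carrier R" and vc: "v i \<in> carrier R" for i
    using pg_vectors_carrier u(1) v(1) by auto
  define w where "w = (\<lambda>i. u i \<oplus> v i)"
  have "w \<in> pg_vectors R d" using u(1) v(1) unfolding pg_vectors_def w_def by auto
  moreover have "w \<noteq> pg_zero R"
  proof
    assume "w = pg_zero R"
    then have "w i = \<zero>" for i by simp
    then have "\<one> \<otimes> u i \<oplus> \<one> \<otimes> v i = \<zero>" for i using uc vc unfolding w_def by simp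
    then show False
      using pg_line_combination_trivial[OF u(1,2) v(1,2) _ one_closed one_closed] pq u(3) v(3)
      by auto
  qed
  ultimately have z: "pg_line R w \<in> pg_points R d" unfolding pg_points_def by blast
  have zp: "pg_line R w \<noteq> p"
    using pg_line_add_ne[OF u(1,2) v(1,2)] pq u(3) v(3) by (simp add: w_def)
  have "(\<lambda>i. v i \<oplus> u i) = w" using uc vc unfolding w_def by (simp add: a_comm)
  then have zq: "pg_line R w \<noteq> q" using pg_line_add_ne[OF v(1,2) u(1,2)] pq u(3) v(3) by auto
  have "\<not> pg_indep R d {p, q, pg_line R w}"
    using pg_not_indep_add[OF u(1,2) v(1) w_def] pq zp zq u(3) v(3) by simp
  then show ?thesis using z zp zq by blast
qed

end


definition pg_unit :: "('b, 'm) ring_scheme \<Rightarrow> nat \<Rightarrow> nat \<Rightarrow> 'b" where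
  "pg_unit R j = (\<lambda>i. if i = j then \<one>\<^bsub>R\<^esub> else \<zero>\<^bsub>R\<^esub>)"

definition pg_unit_points :: "('b, 'm) ring_scheme \<Rightarrow> nat \<Rightarrow> (nat \<Rightarrow> 'b) set set" where
  "pg_unit_points R d = (\<lambda>j. pg_line R (pg_unit R j)) ` {..<d}"

context field
begin

lemma pg_unit_in_vectors: "j < d \<Longrightarrow> pg_unit R j \<in> pg_vectors R d"
  by (auto simp: pg_unit_def pg_vectors_def)

lemma pg_unit_nonzero: "pg_unit R j \<noteq> pg_zero R"
proof
  assume "pg_unit R j = pg_zero R"
  then have "pg_unit R j j = \<zero>" by simp
  then show False by (simp add: pg_unit_def)
qed

lemma mem_pg_line_unit_iff:
  "x \<in> pg_line R (pg_unit R j) \<longleftrightarrow> x j \<in> carrier R \<and> x = (\<lambda>i. if i = j then x j else \<zero>)"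
proof
  assume "x \<in> pg_line R (pg_unit R j)"
  then obtain a where "a \<in> carrier R" "x = (\<lambda>i. a \<otimes> pg_unit R j i)"
    unfolding mem_pg_line_iff by blast
  then show "x j \<in> carrier R \<and> x = (\<lambda>i. if i = j then x j else \<zero>)" by (auto simp: pg_unit_def)
next
  assume x: "x j \<in> carrier R \<and> x = (\<lambda>i. if i = j then x j else \<zero>)"
  have "x i = x j \<otimes> pg_unit R j i" for i
    using fun_cong[OF conjunct2[OF x], of i] conjunct1[OF x] by (simp add: pg_unit_def)
  then show "x \<in> pg_line R (pg_unit R j)" unfolding mem_pg_line_iff using x by blast
qed

lemma inj_pg_line_unit: "inj (\<lambda>j. pg_line R (pg_unit R j))"
proof (rule injI)
  fix j k assume eq: "pg_line R (pg_unit R j) = pg_line R (pg_unit R k)"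
  have "pg_unit R j \<in> pg_line R (pg_unit R k)"
    using self_mem_pg_line[OF pg_unit_in_vectors[of j "Suc j"]] eq by simp
  then have "pg_unit R j j = (if j = k then pg_unit R j k else \<zero>)"
    unfolding mem_pg_line_unit_iff by (metis (mono_tags))
  then show "j = k" by (auto simp: pg_unit_def split: if_splits)
qed

lemma card_pg_unit_points: "card (pg_unit_points R d) = d"
  unfolding pg_unit_points_def using card_image[OF inj_on_subset[OF inj_pg_line_unit]] by simp

lemma pg_unit_points_subset: "pg_unit_points R d \<subseteq> pg_points R d"
  unfolding pg_unit_points_def pg_points_def using pg_unit_in_vectors pg_unit_nonzero by blast

lemma finsum_pg_unit_points:
  assumes c: "\<forall>s\<in>pg_unit_points R d. c s \<in> s"
  shows "finsum R (\<lambda>s. c s i) (pg_unit_points R d) =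
    (if i < d then c (pg_line R (pg_unit R i)) i else \<zero>)"
proof -
  let ?t = "\<lambda>j. pg_line R (pg_unit R j)"
  have "c (?t j) \<in> ?t j" if "j < d" for j using c that unfolding pg_unit_points_def by blast
  then have ct: "c (?t j) j \<in> carrier R" "c (?t j) = (\<lambda>i. if i = j then c (?t j) j else \<zero>)"
    if "j < d" for j
    using that mem_pg_line_unit_iff by blast+
  have ct_at: "c (?t j) i = (if i = j then c (?t j) j else \<zero>)" if "j < d" for j
    using fun_cong[OF ct(2)[OF that], of i] by simp
  have "finsum R (\<lambda>s. c s i) (pg_unit_points R d) = finsum R (\<lambda>j. c (?t j) i) {..<d}"
    unfolding pg_unit_points_def
  proof (rule finsum_reindex)
    show "(\<lambda>s. c s i) \<in> ?t ` {..<d} \<rightarrow> carrier R" using ct ct_at by auto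
  qed (rule inj_on_subset[OF inj_pg_line_unit], simp)
  also have "\<dots> = finsum R (\<lambda>j. if i = j then c (?t j) j else \<zero>) {..<d}"
    by (rule finsum_cong') (use ct ct_at in auto)
  also have "\<dots> = (if i < d then c (?t i) i else \<zero>)"
  proof (cases "i < d")
    case True
    then show ?thesis using ct(1) by (simp add: finsum_singleton)
  next
    case False
    then have "finsum R (\<lambda>j. if i = j then c (?t j) j else \<zero>) {..<d} = finsum R (\<lambda>j. \<zero>) {..<d}"
      by (intro finsum_cong') auto
    then show ?thesis using False by simp
  qed
  finally show ?thesis .
qed

lemma pg_indep_unit_points: "pg_indep R d (pg_unit_points R d)"
  unfolding pg_indep_def
proof (intro conjI allI impI ballI)
  show "pg_unit_points R d \<subseteq> pg_points R d" by (rule pg_unit_points_subset)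
  fix c s assume A: "(\<forall>s\<in>pg_unit_points R d. c s \<in> s) \<and>
      (\<lambda>i. finsum R (\<lambda>s. c s i) (pg_unit_points R d)) = pg_zero R"
    and s: "s \<in> pg_unit_points R d"
  then obtain j where j: "j < d" "s = pg_line R (pg_unit R j)" unfolding pg_unit_points_def by blast
  have "c s j = \<zero>"
    using fun_cong[OF conjunct2[OF A], of j] finsum_pg_unit_points[OF conjunct1[OF A], of j] j
    by simp
  moreover have "c s = (\<lambda>i. if i = j then c s j else \<zero>)"
    using A s j(2) mem_pg_line_unit_iff by blast
  ultimately have "c s i = \<zero>" for i by (metis (full_types))
  then show "c s = pg_zero R" by (simp add: fun_eq_iff)
qed

lemma pg_unit_points_coordinates:
  assumes v: "v \<in> pg_vectors R d"
    and c: "c = (\<lambda>s i. if s = pg_line R (pg_unit R i) then v i else \<zero>)"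
  shows "\<forall>s\<in>pg_unit_points R d. c s \<in> s"
    and "finsum R (\<lambda>s. c s i) (pg_unit_points R d) = v i"
proof -
  have c_unit: "c (pg_line R (pg_unit R j)) = (\<lambda>i. if i = j then v j else \<zero>)" for j
    using injD[OF inj_pg_line_unit] unfolding c fun_eq_iff by auto
  show mem: "\<forall>s\<in>pg_unit_points R d. c s \<in> s"
    unfolding pg_unit_points_def using c_unit pg_vectors_carrier[OF v]
    by (auto simp: mem_pg_line_unit_iff)
  show "finsum R (\<lambda>s. c s i) (pg_unit_points R d) = v i"
    using finsum_pg_unit_points[OF mem, of i] c_unit v unfolding pg_vectors_def by auto
qed

text \<open>A point outside the unit points is spanned by them: write its vector in coordinates.\<close>
lemma pg_unit_points_maximal:
  assumes p: "p \<in> pg_points R d" "p \<notin> pg_unit_points R d"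
  shows "\<not> pg_indep R d (insert p (pg_unit_points R d))"
proof
  assume indep: "pg_indep R d (insert p (pg_unit_points R d))"
  obtain v where v: "v \<in> pg_vectors R d" "v \<noteq> pg_zero R" "p = pg_line R v"
    using p(1) by (rule pg_pointE)
  have vc: "v i \<in> carrier R" for i using pg_vectors_carrier[OF v(1)] .
  have neg: "(\<lambda>i. \<ominus> v i) \<in> pg_vectors R d" using v(1) unfolding pg_vectors_def by auto
  define c where "c = (\<lambda>s i. if s = pg_line R (pg_unit R i) then \<ominus> v i else \<zero>)"
  note coordinates = pg_unit_points_coordinates[OF neg c_def]
  define c' where "c' s = (if s = p then v else c s)" for s
  have mem: "\<forall>s\<in>insert p (pg_unit_points R d). c' s \<in> s"
    using coordinates(1) self_mem_pg_line[OF v(1)] v(3) p(2) unfolding c'_def by auto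
  have "(\<lambda>i. finsum R (\<lambda>s. c' s i) (insert p (pg_unit_points R d))) = pg_zero R"
  proof
    fix i
    have carr: "c' s i \<in> carrier R" if "s \<in> insert p (pg_unit_points R d)" for s
      using pg_point_carrier mem that p(1) pg_unit_points_subset by blast
    have "c s i \<in> carrier R" for s unfolding c_def using vc by simp
    then have "finsum R (\<lambda>s. c' s i) (pg_unit_points R d) =
        finsum R (\<lambda>s. c s i) (pg_unit_points R d)"
      using p(2) by (intro finsum_cong') (auto simp: c'_def)
    then have "finsum R (\<lambda>s. c' s i) (insert p (pg_unit_points R d)) = v i \<oplus> \<ominus> v i"
      using carr p(2) coordinates(2) vc
      by (subst finsum_insert) (auto simp: c'_def pg_unit_points_def)
    then show "finsum R (\<lambda>s. c' s i) (insert p (pg_unit_points R d)) = pg_zero R i"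
      using vc[of i] by (simp add: r_neg)
  qed
  then have "c' p = pg_zero R" using indep mem by (intro pg_indepD) auto
  then show False using v(2) by (simp add: c'_def)
qed

end


lemma gr_PG [simp]: "gr (PG R d) = pg_points R d"
  by (simp add: gr_def PG_def)

lemma indep_PG [simp]: "indep (PG R d) = pg_indep R d"
  by (simp add: indep_def PG_def)

text \<open>The matroid axioms for PG R d are a hypothesis here: every projective geometry in the
  theorem arrives through an isomorphism, which supplies them.\<close>
lemma matroid_rank_PG:
  assumes R: "field R" and PG: "matroid (PG R d)"
  shows "matroid_rank (PG R d) = d"
proof -
  interpret R: field R by (fact R)
  interpret PG: finite_matroid "PG R d" using PG by (rule finite_matroidI)
  have "card (pg_unit_points R d) = mrank_of (PG R d) (gr (PG R d))"
    using R.pg_unit_points_subset R.pg_indep_unit_points R.pg_unit_points_maximal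
    by (intro PG.card_maximal_indep_eq_rank) auto
  then show ?thesis using R.card_pg_unit_points unfolding matroid_rank_def by simp
qed

lemma round_PG:
  assumes R: "field R" and PG: "matroid (PG R d)"
  shows "round (PG R d)"
proof -
  interpret R: field R by (fact R)
  interpret PG: finite_matroid "PG R d" using PG by (rule finite_matroidI)
  show ?thesis
    by (rule PG.round_if_three_point_lines) (use R.pg_indep_pair R.pg_third_point in auto)
qed

context field
begin

lemma card_pg_vectors:
  assumes fin: "finite (carrier R)"
  shows "finite (pg_vectors R d) \<and> card (pg_vectors R d) = card (carrier R) ^ d"
proof -
  define h where "h v = (\<lambda>i. if i < d then v i else undefined)" for v :: "nat \<Rightarrow> 'a"
  have "inj_on h (pg_vectors R d)"
  proof (rule inj_onI)
    fix v w assume v: "v \<in> pg_vectors R d" and w: "w \<in> pg_vectors R d" and "h v = h w"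
    then have hvw: "h v i = h w i" for i by simp
    have "v i = w i" if "i < d" for i using that hvw[of i] by (simp add: h_def)
    moreover have "v i = w i" if "\<not> i < d" for i using that v w by (simp add: pg_vectors_def)
    ultimately show "v = w" by (meson ext)
  qed
  moreover have "h ` pg_vectors R d = PiE {..<d} (\<lambda>_. carrier R)"
  proof
    show "h ` pg_vectors R d \<subseteq> PiE {..<d} (\<lambda>_. carrier R)"
      unfolding h_def pg_vectors_def by (auto simp: PiE_iff extensional_def split: if_splits)
    show "PiE {..<d} (\<lambda>_. carrier R) \<subseteq> h ` pg_vectors R d"
    proof
      fix f assume f: "f \<in> PiE {..<d} (\<lambda>_. carrier R)"
      define v where "v i = (if i < d then f i else \<zero>)" for i
      have "v \<in> pg_vectors R d" using f unfolding v_def pg_vectors_def by (auto simp: PiE_iff)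
      moreover have "h v = f" using f unfolding h_def v_def by (auto simp: PiE_iff extensional_def)
      ultimately show "f \<in> h ` pg_vectors R d" by blast
    qed
  qed
  ultimately have "bij_betw h (pg_vectors R d) (PiE {..<d} (\<lambda>_. carrier R))"
    unfolding bij_betw_def by blast
  then show ?thesis
    using fin by (simp add: bij_betw_finite bij_betw_same_card card_PiE finite_PiE)
qed

lemma card_pg_line_nonzero:
  assumes v: "v \<in> pg_vectors R d" "v \<noteq> pg_zero R"
  shows "card (pg_line R v - {pg_zero R}) = card (carrier R) - 1"
proof -
  obtain j where j: "v j \<noteq> \<zero>" using v(2) by (auto simp: pg_zero_def)
  have vc: "v i \<in> carrier R" for i using pg_vectors_carrier[OF v(1)] .
  define h where "h a = (\<lambda>i. a \<otimes> v i)" for a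
  have "inj_on h (carrier R - {\<zero>})"
  proof (rule inj_onI)
    fix a b assume ab: "a \<in> carrier R - {\<zero>}" "b \<in> carrier R - {\<zero>}" and "h a = h b"
    then have "h a j = h b j" by simp
    then show "a = b" using ab m_rcancel[OF j vc[of j]] by (simp add: h_def)
  qed
  moreover have "h ` (carrier R - {\<zero>}) = pg_line R v - {pg_zero R}"
  proof
    show "h ` (carrier R - {\<zero>}) \<subseteq> pg_line R v - {pg_zero R}"
    proof
      fix x assume "x \<in> h ` (carrier R - {\<zero>})"
      then obtain a where a: "a \<in> carrier R" "a \<noteq> \<zero>" "x = h a" by blast
      have "x j \<noteq> \<zero>" using a j vc[of j] integral_iff by (simp add: h_def)
      moreover have "x \<in> pg_line R v" unfolding mem_pg_line_iff using a by (auto simp: h_def)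
      ultimately show "x \<in> pg_line R v - {pg_zero R}" by auto
    qed
    show "pg_line R v - {pg_zero R} \<subseteq> h ` (carrier R - {\<zero>})"
    proof
      fix x assume x: "x \<in> pg_line R v - {pg_zero R}"
      then have "x \<in> pg_line R v" by blast
      then obtain a where a: "a \<in> carrier R" "x = h a" unfolding mem_pg_line_iff h_def by blast
      have "a \<noteq> \<zero>"
      proof
        assume "a = \<zero>"
        then have "x = pg_zero R" using a(2) vc by (simp add: h_def pg_zero_def)
        then show False using x by blast
      qed
      then show "x \<in> h ` (carrier R - {\<zero>})" using a by blast
    qed
  qed
  ultimately have "card (pg_line R v - {pg_zero R}) = card (carrier R - {\<zero>})"
    by (metis card_image)
  then show ?thesis by simp
qed

lemma card_pg_point_nonzero:
  assumes "p \<in> pg_points R d" shows "card (p - {pg_zero R}) = card (carrier R) - 1"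
  using assms card_pg_line_nonzero by (elim pg_pointE) simp

lemma pg_points_nonzero_disjoint:
  assumes p: "p \<in> pg_points R d" and q: "q \<in> pg_points R d" and pq: "p \<noteq> q"
  shows "(p - {pg_zero R}) \<inter> (q - {pg_zero R}) = {}"
proof -
  obtain u where u: "u \<in> pg_vectors R d" "p = pg_line R u" using p by (rule pg_pointE)
  obtain v where v: "v \<in> pg_vectors R d" "q = pg_line R v" using q by (rule pg_pointE)
  have "p = q" if x: "x \<in> p - {pg_zero R}" "x \<in> q - {pg_zero R}" for x
  proof -
    have "x \<in> pg_line R u" "x \<in> pg_line R v" "x \<noteq> pg_zero R" using x u(2) v(2) by auto
    then have "pg_line R x = pg_line R u" "pg_line R x = pg_line R v"
      using pg_line_eq_if_mem[OF u(1)] pg_line_eq_if_mem[OF v(1)] by blast+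
    then show ?thesis using u(2) v(2) by simp
  qed
  then show ?thesis using pq by blast
qed

text \<open>The nonzero vectors are partitioned by the points, each containing q - 1 of them.\<close>
lemma card_pg_points:
  assumes fin: "finite (carrier R)"
  shows "card (pg_points R d) * (card (carrier R) - 1) = card (carrier R) ^ d - 1"
proof -
  have vecs: "finite (pg_vectors R d)" "card (pg_vectors R d) = card (carrier R) ^ d"
    using card_pg_vectors[OF fin] by auto
  have points_sub: "p \<subseteq> pg_vectors R d" if "p \<in> pg_points R d" for p
    using that pg_line_subset_vectors by (elim pg_pointE) blast
  have union: "(\<Union>p\<in>pg_points R d. p - {pg_zero R}) = pg_vectors R d - {pg_zero R}"
  proof
    show "(\<Union>p\<in>pg_points R d. p - {pg_zero R}) \<subseteq> pg_vectors R d - {pg_zero R}"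
      using points_sub by blast
    show "pg_vectors R d - {pg_zero R} \<subseteq> (\<Union>p\<in>pg_points R d. p - {pg_zero R})"
    proof
      fix x assume x: "x \<in> pg_vectors R d - {pg_zero R}"
      then have "pg_line R x \<in> pg_points R d" unfolding pg_points_def by blast
      moreover have "x \<in> pg_line R x - {pg_zero R}" using self_mem_pg_line x by blast
      ultimately show "x \<in> (\<Union>p\<in>pg_points R d. p - {pg_zero R})" by blast
    qed
  qed
  have "pg_points R d \<subseteq> Pow (pg_vectors R d)" using points_sub by blast
  then have fin_points: "finite (pg_points R d)" using vecs(1) by (simp add: finite_subset)
  have "card (carrier R) ^ d - 1 = card (\<Union>p\<in>pg_points R d. p - {pg_zero R})"
  proof -
    have "pg_zero R \<in> pg_vectors R d" unfolding pg_vectors_def by simp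
    then show ?thesis unfolding union using vecs(2) by (simp add: card_Diff_singleton)
  qed
  also have "\<dots> = (\<Sum>p\<in>pg_points R d. card (p - {pg_zero R}))"
  proof (rule card_UN_disjoint)
    show "\<forall>p\<in>pg_points R d. finite (p - {pg_zero R})"
      using finite_subset[OF points_sub vecs(1)] by blast
    show "\<forall>p\<in>pg_points R d. \<forall>q\<in>pg_points R d. p \<noteq> q \<longrightarrow> (p - {pg_zero R}) \<inter> (q - {pg_zero R}) = {}"
      using pg_points_nonzero_disjoint by blast
  qed (fact fin_points)
  also have "\<dots> = (\<Sum>p\<in>pg_points R d. card (carrier R) - 1)"
    by (rule sum.cong) (simp_all add: card_pg_point_nonzero)
  finally show ?thesis by simp
qed

end

lemma card_pg_points_eq:
  assumes R: "field R" "finite (carrier R)" and S: "field S" "finite (carrier S)"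
    and card_eq: "card (carrier R) = card (carrier S)"
  shows "card (pg_points R d) = card (pg_points S d)"
proof -
  interpret R: field R by (fact R(1))
  have "card {\<zero>\<^bsub>R\<^esub>, \<one>\<^bsub>R\<^esub>} = 2" by simp
  moreover have "card {\<zero>\<^bsub>R\<^esub>, \<one>\<^bsub>R\<^esub>} \<le> card (carrier R)" by (rule card_mono[OF R(2)]) simp
  ultimately have "2 \<le> card (carrier R)" by linarith
  moreover have "card (pg_points R d) * (card (carrier R) - 1) =
      card (pg_points S d) * (card (carrier R) - 1)"
    using R.card_pg_points[OF R(2)] field.card_pg_points[OF S] card_eq by simp
  ultimately show ?thesis by simp
qed


section \<open>Round matroids in the class\<close>

lemma miso_card_gr: "miso M M' \<Longrightarrow> card (gr M) = card (gr M')"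
  unfolding miso_def using bij_betw_same_card by blast

lemma round_if_iso_PG: assumes "iso_PG q d M" shows "round M"
proof -
  obtain R :: "nat ring" where R: "field R" and iso: "miso M (PG R d)"
    using assms unfolding iso_PG_def by blast
  then have "matroid (PG R d)" by (simp add: miso_def)
  then show ?thesis using miso_round[OF iso] round_PG[OF R] by blast
qed

lemma iso_PG_matroid_rank: "iso_PG q d M \<Longrightarrow> matroid_rank M = d"
  unfolding iso_PG_def using miso_rank matroid_rank_PG miso_def by metis

context finite_matroid
begin

lemma round_if_spanning_PG:
  assumes "S \<subseteq> gr M" "mclosure M S = gr M" "is_PG_over q (restrict M S)"
  shows "round M"
  using assms round_if_spanning_restrict_round round_if_iso_PG unfolding is_PG_over_def by blast

text \<open>Two projective geometries of the same rank over fields of the same order have the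
  same number of points, so a spanning copy of PG(r-1,q) inside PG(r-1,q) is everything.\<close>
lemma spanning_PG_eq_gr:
  assumes S: "S \<subseteq> gr M" "mclosure M S = gr M" and PG_S: "is_PG_over q (restrict M S)"
    and PG_M: "iso_PG q (matroid_rank M) M"
  shows "S = gr M"
proof -
  obtain d and R :: "nat ring" where R: "field R" "finite (carrier R)" "card (carrier R) = q"
    and iso_S: "miso (restrict M S) (PG R d)"
    using PG_S unfolding is_PG_over_def iso_PG_def by blast
  obtain R' :: "nat ring" where R': "field R'" "finite (carrier R')" "card (carrier R') = q"
    and iso_M: "miso M (PG R' (matroid_rank M))"
    using PG_M unfolding iso_PG_def by blast
  have "d = matroid_rank M"
    using iso_PG_matroid_rank[of q d "restrict M S"] R iso_S matroid_rank_restrict_spanning[OF S]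
    unfolding iso_PG_def by blast
  then have "card S = card (gr M)"
    using miso_card_gr[OF iso_S] miso_card_gr[OF iso_M] card_pg_points_eq[OF R(1,2) R'(1,2)]
      R(3) R'(3)
    by simp
  then show ?thesis using card_subset_eq[OF finite_gr S(1)] by simp
qed

end

lemma gen_par_conn_eq_if_subset:
  assumes M1: "matroid M1" and M2: "matroid M2" and conn: "is_gen_par_conn M1 M2 M"
    and sub: "gr M1 \<subseteq> gr M2" and agree: "restrict M1 (gr M1 \<inter> gr M2) = restrict M2 (gr M1 \<inter> gr M2)"
  shows "M = M2"
proof -
  have "restrict M1 (gr M1 \<inter> gr M2) = M1"
    using finite_matroid.restrict_gr[OF finite_matroidI[OF M1]] sub by (simp add: Int_absorb2)
  then have "is_gen_par_conn (restrict M2 (gr M1)) M2 M"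
    using conn agree sub by (simp add: Int_absorb2)
  then show ?thesis using gen_par_conn_restrict_eq[OF M2 sub] by blast
qed

lemma round_gen_par_conn_eq_part:
  assumes M1: "matroid M1" and M2: "matroid M2"
    and IH2: "round M2 \<Longrightarrow> iso_PG q (matroid_rank M2) M2"
    and conn: "is_gen_par_conn M1 M2 M" and T: "T = gr M1 \<inter> gr M2" and flat_T: "flat M1 T"
    and agree: "restrict M1 T = restrict M2 T" and PG_T: "is_PG_over q (restrict M1 T)"
    and round: "round M"
  shows "M = M1 \<or> M = M2"
  using round_gen_par_conn_cases[OF M2 conn T flat_T round]
proof
  assume "gr M1 \<subseteq> gr M2"
  then show ?thesis using gen_par_conn_eq_if_subset[OF M1 M2 conn] agree T by blast
next
  interpret M2: finite_matroid M2 using M2 by (rule finite_matroidI)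
  assume span: "mclosure M2 T = gr M2"
  have T2: "T \<subseteq> gr M2" and PG_T2: "is_PG_over q (restrict M2 T)" using T agree PG_T by auto
  then have "iso_PG q (matroid_rank M2) M2" using M2.round_if_spanning_PG[OF T2 span] IH2 by blast
  then have "T = gr M2" using M2.spanning_PG_eq_gr[OF T2 span PG_T2] by blast
  then have "gr M2 \<subseteq> gr M1" using T by blast
  then show ?thesis
    using gen_par_conn_eq_if_subset[OF M2 M1 gen_par_conn_commute[OF conn]] agree T
    by (simp add: Int_commute)
qed

lemma in_Mq_round_imp_iso_PG:
  assumes "in_Mq q M"
  shows "matroid M \<and> (round M \<longrightarrow> iso_PG q (matroid_rank M) M)"
  using assms
proof (induction rule: in_Mq.induct)
  case (pg M)
  then obtain d where d: "iso_PG q d M" unfolding is_PG_over_def by blast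
  then have "matroid M" by (auto simp: iso_PG_def miso_def)
  moreover have "matroid_rank M = d" using d by (rule iso_PG_matroid_rank)
  ultimately show ?case using d by simp
next
  case (iso M M')
  have "iso_PG q (matroid_rank M') M'" if "round M'"
  proof -
    have "iso_PG q (matroid_rank M) M" using iso.IH miso_round[OF iso.hyps(2) that] by blast
    then show ?thesis using iso_PG_miso[OF _ iso.hyps(2)] miso_rank[OF iso.hyps(2)] by simp
  qed
  moreover have "matroid M'" using iso.hyps(2) by (simp add: miso_def)
  ultimately show ?case by blast
next
  case (gpc M1 M2 T M)
  have "flat M1 T" using gpc.hyps(4) by (simp add: modular_flat_def)
  then have "round M \<Longrightarrow> M = M1 \<or> M = M2"
    using round_gen_par_conn_eq_part[of M1 M2 q M T] gpc by blast
  moreover have "matroid M" using gpc.hyps(7) by (simp add: is_gen_par_conn_def)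
  ultimately show ?case using gpc.IH by blast
qed

theorem lemma3p7:
  fixes q r :: nat and M :: "'a matroid"
  assumes "prime_power q"
    and "in_Mq q M"
    and "matroid_rank M = r"
  shows "round M \<longleftrightarrow> iso_PG q r M"
  using in_Mq_round_imp_iso_PG[OF assms(2)] round_if_iso_PG assms(3) by blast

end
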